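(* Let $(A,\diamond,\alpha)$ be a Hom-zinbiel algebra and let $(\prec_i,\succ_i)_{i\ge0}$ be a Hom-dendriform formal deformation of $A$. Define $x*y=x\succ_1 y-y\prec_1 x$ for $x,y\in A$. Then $(A,\diamond,*,\alpha)$ is a Hom-pre-Poisson algebra.
   Context: A Hom-zinbiel algebra $(A,\diamond,\alpha)$: bilinear $\diamond$, linear $\alpha$ with $\alpha(x\diamond y)=\alpha(x)\diamond\alpha(y)$ and $\alpha(x)\diamond(y\diamond z)=(x\diamond y)\diamond\alpha(z)+(y\diamond x)\diamond\alpha(z)$. A Hom-dendriform algebra $(D,\prec,\succ,\alpha)$: bilinear $\prec,\succ$ and linear $\alpha$ which is a morphism for both products, such that $(x\prec y)\prec\alpha(z)=\alpha(x)\prec(y\prec z+y\succ z)$, $(x\succ y)\prec\alpha(z)=\alpha(x)\succ(y\prec z)$, $\alpha(x)\succ(y\succ z)=(x\prec y+x\succ y)\succ\alpha(z)$. A Hom-dendriform formal deformation of $(A,\diamond,\alpha)$ is a sequence of bilinear maps $\prec_i,\succ_i:A\otimes A\to A$ ($i\ge0$) with $x\succ_0 y=y\prec_0 x=x\diamond y$, such that the $\mathbb{K}[[t]]$-bilinear products $x\prec_t y=\sum_{i\ge0}(x\prec_i y)t^i$, $x\succ_t y=\sum_{i\ge0}(x\succ_i y)t^i$ on $A[[t]]$, together with the $t$-linear extension of $\alpha$, form a Hom-dendriform algebra $(A[[t]],\prec_t,\succ_t,\alpha)$. A Hom-pre-Lie algebra $(A,*,\alpha)$: $\alpha(x*y)=\alpha(x)*\alpha(y)$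 and $(x*y)*\alpha(z)-\alpha(x)*(y*z)=(y*x)*\alpha(z)-\alpha(y)*(x*z)$. A Hom-pre-Poisson algebra $(A,\diamond,*,\alpha)$: $(A,\diamond,\alpha)$ Hom-zinbiel, $(A,*,\alpha)$ Hom-pre-Lie, and $(x*y-y*x)\diamond\alpha(z)=\alpha(x)*(y\diamond z)-\alpha(y)\diamond(x*z)$, $(x\diamond y+y\diamond x)*\alpha(z)=\alpha(x)\diamond(y*z)+\alpha(y)\diamond(x*z)$ for all $x,y,z$. *)

theory Defs
  imports Complex_Main
begin

text \<open>Ground field 'k, algebra A = type 'a, a 'k-vector space via scale.\<close>

definition bilin :: "('k::field \<Rightarrow> 'a::ab_group_add \<Rightarrow> 'a) \<Rightarrow> ('a \<Rightarrow> 'a \<Rightarrow> 'a) \<Rightarrow> bool" where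
  "bilin s m \<longleftrightarrow> (\<forall>x. Vector_Spaces.linear s s (m x)) \<and> (\<forall>y. Vector_Spaces.linear s s (\<lambda>x. m x y))"

definition hom_zinbiel :: "('k::field \<Rightarrow> 'a::ab_group_add \<Rightarrow> 'a) \<Rightarrow> ('a \<Rightarrow> 'a \<Rightarrow> 'a) \<Rightarrow> ('a \<Rightarrow> 'a) \<Rightarrow> bool" where
  "hom_zinbiel s m \<alpha> \<longleftrightarrow> bilin s m \<and> Vector_Spaces.linear s s \<alpha> \<and>
     (\<forall>x y. \<alpha> (m x y) = m (\<alpha> x) (\<alpha> y)) \<and>
     (\<forall>x y z. m (\<alpha> x) (m y z) = m (m x y) (\<alpha> z) + m (m y x) (\<alpha> z))"

definition hom_dendriform_axioms :: "('b \<Rightarrow> 'b \<Rightarrow> 'b) \<Rightarrow> ('b \<Rightarrow> 'b \<Rightarrow> 'b) \<Rightarrow> ('b \<Rightarrow> 'b \<Rightarrow> 'b) \<Rightarrow> ('b \<Rightarrow> 'b) \<Rightarrow> bool" where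
  "hom_dendriform_axioms add l r \<alpha> \<longleftrightarrow>
     (\<forall>x y. \<alpha> (l x y) = l (\<alpha> x) (\<alpha> y)) \<and> (\<forall>x y. \<alpha> (r x y) = r (\<alpha> x) (\<alpha> y)) \<and>
     (\<forall>x y z. l (l x y) (\<alpha> z) = l (\<alpha> x) (add (l y z) (r y z))) \<and>
     (\<forall>x y z. l (r x y) (\<alpha> z) = r (\<alpha> x) (l y z)) \<and>
     (\<forall>x y z. r (\<alpha> x) (r y z) = r (add (l x y) (r x y)) (\<alpha> z))"

text \<open>A[[t]] is represented as nat \<Rightarrow> 'a (coefficient sequences). The K[[t]]-bilinear extension
  of x \<cdot>_t y = \<Sum>_i (x \<cdot>_i y) t^i to A[[t]]: the n-th coefficient of f \<cdot>_t g is
  \<Sum>_{i+j+k=n} f_j \<cdot>_i g_k.\<close>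
definition ser_prod :: "(nat \<Rightarrow> 'a \<Rightarrow> 'a \<Rightarrow> 'a::comm_monoid_add) \<Rightarrow> (nat \<Rightarrow> 'a) \<Rightarrow> (nat \<Rightarrow> 'a) \<Rightarrow> (nat \<Rightarrow> 'a)" where
  "ser_prod p f g = (\<lambda>n. \<Sum>i\<le>n. \<Sum>j\<le>n - i. p i (f j) (g (n - i - j)))"

definition ser_map :: "('a \<Rightarrow> 'a) \<Rightarrow> (nat \<Rightarrow> 'a) \<Rightarrow> (nat \<Rightarrow> 'a)" where
  "ser_map \<alpha> f = (\<lambda>n. \<alpha> (f n))"

definition hom_dendriform_deformation ::
  "('k::field \<Rightarrow> 'a::ab_group_add \<Rightarrow> 'a) \<Rightarrow> ('a \<Rightarrow> 'a \<Rightarrow> 'a) \<Rightarrow> ('a \<Rightarrow> 'a)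
   \<Rightarrow> (nat \<Rightarrow> 'a \<Rightarrow> 'a \<Rightarrow> 'a) \<Rightarrow> (nat \<Rightarrow> 'a \<Rightarrow> 'a \<Rightarrow> 'a) \<Rightarrow> bool" where
  "hom_dendriform_deformation s m \<alpha> prec succ \<longleftrightarrow>
     (\<forall>i. bilin s (prec i) \<and> bilin s (succ i)) \<and>
     (\<forall>x y. succ 0 x y = m x y \<and> prec 0 y x = m x y) \<and>
     hom_dendriform_axioms (\<lambda>f g n. f n + g n) (ser_prod prec) (ser_prod succ) (ser_map \<alpha>)"

definition hom_pre_lie :: "('k::field \<Rightarrow> 'a::ab_group_add \<Rightarrow> 'a) \<Rightarrow> ('a \<Rightarrow> 'a \<Rightarrow> 'a) \<Rightarrow> ('a \<Rightarrow> 'a) \<Rightarrow> bool" where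
  "hom_pre_lie s p \<alpha> \<longleftrightarrow> bilin s p \<and> Vector_Spaces.linear s s \<alpha> \<and>
     (\<forall>x y. \<alpha> (p x y) = p (\<alpha> x) (\<alpha> y)) \<and>
     (\<forall>x y z. p (p x y) (\<alpha> z) - p (\<alpha> x) (p y z) = p (p y x) (\<alpha> z) - p (\<alpha> y) (p x z))"

definition hom_pre_poisson :: "('k::field \<Rightarrow> 'a::ab_group_add \<Rightarrow> 'a) \<Rightarrow> ('a \<Rightarrow> 'a \<Rightarrow> 'a) \<Rightarrow> ('a \<Rightarrow> 'a \<Rightarrow> 'a) \<Rightarrow> ('a \<Rightarrow> 'a) \<Rightarrow> bool" where
  "hom_pre_poisson s m p \<alpha> \<longleftrightarrow> hom_zinbiel s m \<alpha> \<and> hom_pre_lie s p \<alpha> \<and>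
     (\<forall>x y z. m (p x y - p y x) (\<alpha> z) = p (\<alpha> x) (m y z) - m (\<alpha> y) (p x z)) \<and>
     (\<forall>x y z. p (m x y + m y x) (\<alpha> z) = m (\<alpha> x) (p y z) + m (\<alpha> y) (p x z))"

end

theory Submission
  imports Defs
begin

text \<open>Evaluating the deformed Hom-dendriform identities on constant series and comparing
  coefficients of \<open>t\<^sup>n\<close> yields, for every \<open>n\<close>, an identity between the products
  \<open>\<prec>\<^sub>i, \<succ>\<^sub>i\<close> with \<open>i \<le> n\<close>. The Hom-pre-Lie identity of
  \<open>x * y = x \<succ>\<^sub>1 y - y \<prec>\<^sub>1 x\<close> is a signed sum of six instances of the order-2
  identities, and each of the two compatibility conditions is a signed sum of three instances
  of the order-1 identities.\<close>

lemma linear_diff_fun: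
  assumes "Vector_Spaces.linear s s f" "Vector_Spaces.linear s s g"
  shows "Vector_Spaces.linear s s (\<lambda>x. f x - g x)"
proof -
  have "module_pair s s"
    using assms(1) by (simp add: Vector_Spaces.linear_iff module_pair_def module_iff_vector_space)
  then have "module_hom s s (\<lambda>x. f x - g x)"
    by (rule module_pair.module_hom_sub) (use assms in \<open>simp_all add: module_hom_linearI\<close>)
  then show ?thesis
    by (simp add: module_hom_iff_linear)
qed

lemma bilin_simps:
  assumes "bilin s p"
  shows "p 0 y = 0" "p x 0 = 0"
    "p (a + b) y = p a y + p b y" "p x (a + b) = p x a + p x b"
    "p (a - b) y = p a y - p b y" "p x (a - b) = p x a - p x b"
proof -
  have left: "module_hom s s (\<lambda>x. p x y)" and right: "module_hom s s (p x)"
    using assms by (simp_all add: bilin_def module_hom_linearI)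
  show "p 0 y = 0" "p (a + b) y = p a y + p b y" "p (a - b) y = p a y - p b y"
    using module_hom.zero[OF left] module_hom.add[OF left] module_hom.diff[OF left] by auto
  show "p x 0 = 0" "p x (a + b) = p x a + p x b" "p x (a - b) = p x a - p x b"
    using module_hom.zero[OF right] module_hom.add[OF right] module_hom.diff[OF right] by auto
qed

lemma bilin_diff_transpose:
  assumes "bilin s p" "bilin s q"
  shows "bilin s (\<lambda>x y. p x y - q y x)"
  using assms by (simp add: bilin_def linear_diff_fun)

definition ser_const :: "'a \<Rightarrow> nat \<Rightarrow> 'a::zero" where
  "ser_const x = (\<lambda>n. if n = 0 then x else 0)"

lemma ser_map_ser_const: "\<alpha> 0 = 0 \<Longrightarrow> ser_map \<alpha> (ser_const x) = ser_const (\<alpha> x)"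
  by (auto simp: ser_map_def ser_const_def)

lemma ser_prod_ser_const_right:
  assumes "\<And>i u. p i u 0 = 0"
  shows "ser_prod p f (ser_const w) n = (\<Sum>i\<le>n. p i (f (n - i)) w)"
  unfolding ser_prod_def
proof (rule sum.cong)
  fix i assume "i \<in> {..n}"
  have "(\<Sum>j\<le>n - i. p i (f j) (ser_const w (n - i - j)))
      = (\<Sum>j\<le>n - i. if j = n - i then p i (f j) w else 0)"
    by (rule sum.cong) (auto simp: ser_const_def assms)
  then show "(\<Sum>j\<le>n - i. p i (f j) (ser_const w (n - i - j))) = p i (f (n - i)) w"
    by simp
qed simp

lemma ser_prod_ser_const_left:
  assumes "\<And>i u. p i 0 u = 0"
  shows "ser_prod p (ser_const w) g n = (\<Sum>i\<le>n. p i w (g (n - i)))"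
  unfolding ser_prod_def
proof (rule sum.cong)
  fix i assume "i \<in> {..n}"
  have "(\<Sum>j\<le>n - i. p i (ser_const w j) (g (n - i - j)))
      = (\<Sum>j\<le>n - i. if j = 0 then p i w (g (n - i - j)) else 0)"
    by (rule sum.cong) (auto simp: ser_const_def assms)
  then show "(\<Sum>j\<le>n - i. p i (ser_const w j) (g (n - i - j))) = p i w (g (n - i))"
    by simp
qed simp

lemma ser_prod_ser_const:
  assumes "\<And>i u. p i 0 u = 0" "\<And>i u. p i u 0 = 0"
  shows "ser_prod p (ser_const x) (ser_const y) = (\<lambda>n. p n x y)"
proof
  fix n
  have "ser_prod p (ser_const x) (ser_const y) n = (\<Sum>i\<le>n. if i = n then p i x y else 0)"
    unfolding ser_prod_ser_const_left[of p, OF assms(1)]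
    by (rule sum.cong) (auto simp: ser_const_def assms(2))
  then show "ser_prod p (ser_const x) (ser_const y) n = p n x y"
    by simp
qed

text \<open>The coefficient of \<open>t\<^sup>n\<close> in the difference of the two sides of each deformed
  Hom-dendriform axiom, evaluated on the constant series \<open>x\<close>, \<open>y\<close>, \<open>z\<close>.\<close>

definition prec_prec_defect :: "(nat \<Rightarrow> 'a \<Rightarrow> 'a \<Rightarrow> 'a) \<Rightarrow> (nat \<Rightarrow> 'a \<Rightarrow> 'a \<Rightarrow> 'a) \<Rightarrow> ('a \<Rightarrow> 'a)
     \<Rightarrow> nat \<Rightarrow> 'a \<Rightarrow> 'a \<Rightarrow> 'a \<Rightarrow> 'a::ab_group_add" where
  "prec_prec_defect prec succ \<alpha> n x y z =
     (\<Sum>i\<le>n. prec i (prec (n - i) x y) (\<alpha> z))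
     - (\<Sum>i\<le>n. prec i (\<alpha> x) (prec (n - i) y z + succ (n - i) y z))"

definition succ_prec_defect :: "(nat \<Rightarrow> 'a \<Rightarrow> 'a \<Rightarrow> 'a) \<Rightarrow> (nat \<Rightarrow> 'a \<Rightarrow> 'a \<Rightarrow> 'a) \<Rightarrow> ('a \<Rightarrow> 'a)
     \<Rightarrow> nat \<Rightarrow> 'a \<Rightarrow> 'a \<Rightarrow> 'a \<Rightarrow> 'a::ab_group_add" where
  "succ_prec_defect prec succ \<alpha> n x y z =
     (\<Sum>i\<le>n. prec i (succ (n - i) x y) (\<alpha> z)) - (\<Sum>i\<le>n. succ i (\<alpha> x) (prec (n - i) y z))"

definition succ_succ_defect :: "(nat \<Rightarrow> 'a \<Rightarrow> 'a \<Rightarrow> 'a) \<Rightarrow> (nat \<Rightarrow> 'a \<Rightarrow> 'a \<Rightarrow> 'a) \<Rightarrow> ('a \<Rightarrow> 'a)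
     \<Rightarrow> nat \<Rightarrow> 'a \<Rightarrow> 'a \<Rightarrow> 'a \<Rightarrow> 'a::ab_group_add" where
  "succ_succ_defect prec succ \<alpha> n x y z =
     (\<Sum>i\<le>n. succ i (\<alpha> x) (succ (n - i) y z))
     - (\<Sum>i\<le>n. succ i (prec (n - i) x y + succ (n - i) x y) (\<alpha> z))"

lemma deformation_bilin:
  "hom_dendriform_deformation s m \<alpha> prec succ \<Longrightarrow> bilin s (prec i) \<and> bilin s (succ i)"
  by (simp add: hom_dendriform_deformation_def)

context
  fixes s :: "'k::field \<Rightarrow> 'a::ab_group_add \<Rightarrow> 'a" and m \<alpha> prec succ
  assumes deformation: "hom_dendriform_deformation s m \<alpha> prec succ"
    and \<alpha>_zero: "\<alpha> 0 = 0"
begin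

private lemma ser_const_simps:
  "ser_map \<alpha> (ser_const x) = ser_const (\<alpha> x)"
  "ser_prod prec (ser_const x) (ser_const y) = (\<lambda>n. prec n x y)"
  "ser_prod succ (ser_const x) (ser_const y) = (\<lambda>n. succ n x y)"
  "ser_prod prec f (ser_const w) n = (\<Sum>i\<le>n. prec i (f (n - i)) w)"
  "ser_prod succ f (ser_const w) n = (\<Sum>i\<le>n. succ i (f (n - i)) w)"
  "ser_prod prec (ser_const w) g n = (\<Sum>i\<le>n. prec i w (g (n - i)))"
  "ser_prod succ (ser_const w) g n = (\<Sum>i\<le>n. succ i w (g (n - i)))"
proof -
  have bilin: "bilin s (prec i)" "bilin s (succ i)" for i
    using deformation_bilin[OF deformation] by simp_all
  have zero: "prec i 0 u = 0" "prec i u 0 = 0" "succ i 0 u = 0" "succ i u 0 = 0" for i u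
    by (simp_all add: bilin_simps[OF bilin(1)] bilin_simps[OF bilin(2)])
  show "ser_map \<alpha> (ser_const x) = ser_const (\<alpha> x)"
    by (rule ser_map_ser_const[of \<alpha>, OF \<alpha>_zero])
  show "ser_prod prec (ser_const x) (ser_const y) = (\<lambda>n. prec n x y)"
    "ser_prod succ (ser_const x) (ser_const y) = (\<lambda>n. succ n x y)"
    by (rule ser_prod_ser_const; rule zero)+
  show "ser_prod prec f (ser_const w) n = (\<Sum>i\<le>n. prec i (f (n - i)) w)"
    "ser_prod succ f (ser_const w) n = (\<Sum>i\<le>n. succ i (f (n - i)) w)"
    by (rule ser_prod_ser_const_right; rule zero)+
  show "ser_prod prec (ser_const w) g n = (\<Sum>i\<le>n. prec i w (g (n - i)))"
    "ser_prod succ (ser_const w) g n = (\<Sum>i\<le>n. succ i w (g (n - i)))"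
    by (rule ser_prod_ser_const_left; rule zero)+
qed

private lemma deformation_axioms:
  "hom_dendriform_axioms (\<lambda>f g n. f n + g n) (ser_prod prec) (ser_prod succ) (ser_map \<alpha>)"
  using deformation by (simp add: hom_dendriform_deformation_def)

lemma deformation_multiplicative:
  "\<alpha> (prec n x y) = prec n (\<alpha> x) (\<alpha> y)" "\<alpha> (succ n x y) = succ n (\<alpha> x) (\<alpha> y)"
proof -
  have "ser_map \<alpha> (ser_prod prec (ser_const x) (ser_const y))
      = ser_prod prec (ser_map \<alpha> (ser_const x)) (ser_map \<alpha> (ser_const y))"
    and "ser_map \<alpha> (ser_prod succ (ser_const x) (ser_const y))
      = ser_prod succ (ser_map \<alpha> (ser_const x)) (ser_map \<alpha> (ser_const y))"
    using deformation_axioms by (simp_all add: hom_dendriform_axioms_def)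
  then show "\<alpha> (prec n x y) = prec n (\<alpha> x) (\<alpha> y)" "\<alpha> (succ n x y) = succ n (\<alpha> x) (\<alpha> y)"
    unfolding ser_const_simps by (simp_all add: ser_map_def fun_eq_iff)
qed

lemma deformation_defects_vanish:
  "prec_prec_defect prec succ \<alpha> n x y z = 0"
  "succ_prec_defect prec succ \<alpha> n x y z = 0"
  "succ_succ_defect prec succ \<alpha> n x y z = 0"
proof -
  have "ser_prod prec (ser_prod prec (ser_const x) (ser_const y)) (ser_map \<alpha> (ser_const z))
      = ser_prod prec (ser_map \<alpha> (ser_const x))
          (\<lambda>n. ser_prod prec (ser_const y) (ser_const z) n + ser_prod succ (ser_const y) (ser_const z) n)"
    and "ser_prod prec (ser_prod succ (ser_const x) (ser_const y)) (ser_map \<alpha> (ser_const z))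
      = ser_prod succ (ser_map \<alpha> (ser_const x)) (ser_prod prec (ser_const y) (ser_const z))"
    and "ser_prod succ (ser_map \<alpha> (ser_const x)) (ser_prod succ (ser_const y) (ser_const z))
      = ser_prod succ
          (\<lambda>n. ser_prod prec (ser_const x) (ser_const y) n + ser_prod succ (ser_const x) (ser_const y) n)
          (ser_map \<alpha> (ser_const z))"
    using deformation_axioms by (simp_all add: hom_dendriform_axioms_def)
  then show "prec_prec_defect prec succ \<alpha> n x y z = 0"
    "succ_prec_defect prec succ \<alpha> n x y z = 0"
    "succ_succ_defect prec succ \<alpha> n x y z = 0"
    unfolding ser_const_simps prec_prec_defect_def succ_prec_defect_def succ_succ_defect_def
    by (simp_all add: fun_eq_iff)
qed

end

definition first_order_product ::
    "(nat \<Rightarrow> 'a \<Rightarrow> 'a \<Rightarrow> 'a) \<Rightarrow> (nat \<Rightarrow> 'a \<Rightarrow> 'a \<Rightarrow> 'a) \<Rightarrow> 'a \<Rightarrow> 'a \<Rightarrow> 'a::ab_group_add"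
  where "first_order_product prec succ x y = succ 1 x y - prec 1 y x"

context
  fixes s :: "'k::field \<Rightarrow> 'a::ab_group_add \<Rightarrow> 'a"
    and \<alpha> :: "'a \<Rightarrow> 'a" and prec succ :: "nat \<Rightarrow> 'a \<Rightarrow> 'a \<Rightarrow> 'a"
  assumes bilin_prec: "\<And>i. bilin s (prec i)" and bilin_succ: "\<And>i. bilin s (succ i)"
    and prec_zero: "\<And>x y. prec 0 y x = succ 0 x y"
begin

private lemma sum_atMost_1: "(\<Sum>i\<le>1::nat. f i) = f 0 + (f 1 :: 'b::comm_monoid_add)"
  by (simp add: atMost_Suc add_ac)

private lemma sum_atMost_2: "(\<Sum>i\<le>2::nat. f i) = f 0 + f 1 + (f 2 :: 'b::comm_monoid_add)"
  by (simp add: eval_nat_numeral atMost_Suc add_ac)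

private lemmas expand_simps = sum_atMost_1 sum_atMost_2 bilin_simps[OF bilin_prec]
  bilin_simps[OF bilin_succ] prec_zero first_order_product_def
  prec_prec_defect_def succ_prec_defect_def succ_succ_defect_def

lemma first_order_pre_lie_defect:
  fixes P defines "P \<equiv> first_order_product prec succ"
  shows "P (P x y) (\<alpha> z) - P (\<alpha> x) (P y z) - (P (P y x) (\<alpha> z) - P (\<alpha> y) (P x z)) =
    - succ_succ_defect prec succ \<alpha> 2 x y z - succ_prec_defect prec succ \<alpha> 2 x z y
    + succ_succ_defect prec succ \<alpha> 2 y x z + succ_prec_defect prec succ \<alpha> 2 y z x
    + prec_prec_defect prec succ \<alpha> 2 z x y - prec_prec_defect prec succ \<alpha> 2 z y x"
  unfolding P_def by (simp add: expand_simps)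

lemma first_order_commutator_defect:
  fixes P defines "P \<equiv> first_order_product prec succ"
  shows "succ 0 (P x y - P y x) (\<alpha> z) - (P (\<alpha> x) (succ 0 y z) - succ 0 (\<alpha> y) (P x z)) =
    - succ_succ_defect prec succ \<alpha> 1 x y z + succ_succ_defect prec succ \<alpha> 1 y x z
    + succ_prec_defect prec succ \<alpha> 1 y z x"
  unfolding P_def by (simp add: expand_simps)

lemma first_order_anticommutator_defect:
  fixes P defines "P \<equiv> first_order_product prec succ"
  shows "P (succ 0 x y + succ 0 y x) (\<alpha> z) - (succ 0 (\<alpha> x) (P y z) + succ 0 (\<alpha> y) (P x z)) =
    - succ_succ_defect prec succ \<alpha> 1 x y z - succ_prec_defect prec succ \<alpha> 1 x z y
    + prec_prec_defect prec succ \<alpha> 1 z x y"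
  unfolding P_def by (simp add: expand_simps)

end

theorem theorem4p2:
  fixes s :: "'k::field \<Rightarrow> 'a::ab_group_add \<Rightarrow> 'a"
    and m :: "'a \<Rightarrow> 'a \<Rightarrow> 'a" and \<alpha> :: "'a \<Rightarrow> 'a"
    and prec succ :: "nat \<Rightarrow> 'a \<Rightarrow> 'a \<Rightarrow> 'a"
  assumes "vector_space s"
    and "hom_zinbiel s m \<alpha>"
    and "hom_dendriform_deformation s m \<alpha> prec succ"
  shows "hom_pre_poisson s m (\<lambda>x y. succ 1 x y - prec 1 y x) \<alpha>"
proof -
  define P where "P = first_order_product prec succ"
  have bilin: "bilin s (prec i)" "bilin s (succ i)" for i
    using deformation_bilin[OF assms(3)] by auto
  have m_eq: "m = succ 0" and prec_zero: "prec 0 y x = succ 0 x y" for x y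
    using assms(3) by (auto simp: hom_dendriform_deformation_def fun_eq_iff)
  have linear_\<alpha>: "Vector_Spaces.linear s s \<alpha>"
    using assms(2) by (simp add: hom_zinbiel_def)
  then have \<alpha>_hom: "module_hom s s \<alpha>"
    by (rule module_hom_linearI)
  note \<alpha>_zero = module_hom.zero[OF \<alpha>_hom] and \<alpha>_diff = module_hom.diff[OF \<alpha>_hom]
  note identities = first_order_pre_lie_defect first_order_commutator_defect
      first_order_anticommutator_defect
  note expansions = identities[where s=s and prec=prec and succ=succ and \<alpha>=\<alpha>, OF bilin prec_zero,
      folded P_def, unfolded deformation_defects_vanish[OF assms(3) \<alpha>_zero]]
  have P_eq: "(\<lambda>x y. succ 1 x y - prec 1 y x) = P"
    by (simp add: P_def fun_eq_iff first_order_product_def)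
  have "bilin s P"
    using bilin_diff_transpose[OF bilin(2)[of 1] bilin(1)[of 1]] by (simp only: P_eq)
  moreover have "\<alpha> (P x y) = P (\<alpha> x) (\<alpha> y)" for x y
    by (simp add: P_def first_order_product_def \<alpha>_diff deformation_multiplicative[OF assms(3) \<alpha>_zero])
  ultimately show ?thesis
    using assms(2) linear_\<alpha> expansions unfolding P_eq m_eq
    by (simp add: hom_pre_poisson_def hom_pre_lie_def)
qed

end
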